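(* Let $u,v\in\dot H^{-1}$ and $S>1/2$. Then for every $t\in\mathbb{R}$, with $B_2$ as defined in the context, $$\|B_2(u,v)\|_{\dot H^{-S}}\le c(S)\|u\|_{\dot H^{-1}}\|v\|_{\dot H^{-1}},\qquad c(S)=\Big(\sum_{k\in\mathbb{Z}_0}|k|^{-2S}\Big)^{1/2}.$$
   Context: Write $\mathbb{Z}_0=\mathbb{Z}\setminus\{0\}$. For $s\in\mathbb{R}$, $\dot H^s$ denotes the Hilbert space of complex sequences $v=(v_k)_{k\in\mathbb{Z}_0}$ with $\|v\|_{\dot H^s}^2=\sum_{k\in\mathbb{Z}_0}|k|^{2s}|v_k|^2<\infty$. For $t\in\mathbb{R}$, $$B_2(u,v)_k=\sum_{k_1+k_2=k,\ k_1,k_2\in\mathbb{Z}_0}\frac{e^{3ikk_1k_2t}u_{k_1}v_{k_2}}{k_1k_2},\qquad k\in\mathbb{Z}_0.$$ *)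

theory Defs
  imports "HOL-Analysis.Analysis"
begin

text \<open>Sequences indexed by Z_0 = Z - {0} are modelled as functions int => complex;
  the value at 0 is irrelevant (never used).\<close>

definition Z0 :: "int set" where "Z0 = UNIV - {0}"

definition in_Hdot :: "real \<Rightarrow> (int \<Rightarrow> complex) \<Rightarrow> bool" where
  "in_Hdot sg v \<longleftrightarrow> ((\<lambda>k. abs (real_of_int k) powr (2 * sg) * (norm (v k))^2) summable_on Z0)"

definition Hdot_norm :: "real \<Rightarrow> (int \<Rightarrow> complex) \<Rightarrow> real" where
  "Hdot_norm sg v = sqrt (\<Sum>\<^sub>\<infinity>k\<in>Z0. abs (real_of_int k) powr (2 * sg) * (norm (v k))^2)"

definition B2 :: "real \<Rightarrow> (int \<Rightarrow> complex) \<Rightarrow> (int \<Rightarrow> complex) \<Rightarrow> int \<Rightarrow> complex" where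
  "B2 t u v k = (\<Sum>\<^sub>\<infinity>k1\<in>{k1. k1 \<noteq> 0 \<and> k - k1 \<noteq> 0}.
      exp (\<i> * of_real (3 * real_of_int k * real_of_int k1 * real_of_int (k - k1) * t))
        * u k1 * v (k - k1) / (of_int k1 * of_int (k - k1)))"

definition cS :: "real \<Rightarrow> real" where
  "cS S = sqrt (\<Sum>\<^sub>\<infinity>k\<in>Z0. abs (real_of_int k) powr (-2 * S))"

end

theory Submission
  imports Defs
begin

text \<open>By Cauchy--Schwarz each coefficient of \<open>B\<^sub>2(u,v)\<close> is bounded by the
  \<open>\<ell>\<^sup>2\<close> norms of \<open>|u\<^sub>k|/|k|\<close> and \<open>|v\<^sub>k|/|k|\<close>, so
  \<open>|B\<^sub>2(u,v)\<^sub>k| \<le> \<parallel>u\<parallel>\<^sub>-\<^sub>1 \<parallel>v\<parallel>\<^sub>-\<^sub>1\<close> uniformly in \<open>k\<close> and \<open>t\<close>. A sequence bounded by \<open>M\<close> has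
  \<open>H\<^sup>-\<^sup>S\<close> norm at most \<open>c(S) M\<close>, which is finite because \<open>S > 1/2\<close>.\<close>

lemma summable_on_Z0_abs_powr:
  assumes "p > 1"
  shows "(\<lambda>k::int. \<bar>real_of_int k\<bar> powr (-p)) summable_on Z0"
proof -
  let ?f = "\<lambda>k::int. \<bar>real_of_int k\<bar> powr (-p)"
  let ?pos = "{n::nat. n > 0}"
  have "summable (\<lambda>n. real n powr (-p))"
    using assms by (subst summable_real_powr_iff) auto
  then have "(\<lambda>n. real n powr (-p)) summable_on UNIV"
    by (subst summable_on_UNIV_nonneg_real_iff) auto
  then have nat: "(\<lambda>n. real n powr (-p)) summable_on ?pos"
    by (rule summable_on_subset) auto
  have pos: "?f summable_on int ` ?pos"
    by (subst summable_on_reindex) (use nat in \<open>auto simp: inj_on_def o_def\<close>)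
  have neg: "?f summable_on (\<lambda>n. - int n) ` ?pos"
    by (subst summable_on_reindex) (use nat in \<open>auto simp: inj_on_def o_def\<close>)
  have "Z0 = int ` ?pos \<union> (\<lambda>n. - int n) ` ?pos"
  proof -
    have "k \<in> int ` ?pos \<union> (\<lambda>n. - int n) ` ?pos" if "k \<noteq> 0" for k
    proof (cases "k > 0")
      case True
      then show ?thesis by (intro UnI1 image_eqI[of _ _ "nat k"]) auto
    next
      case False
      then show ?thesis using that by (intro UnI2 image_eqI[of _ _ "nat (-k)"]) auto
    qed
    then show ?thesis unfolding Z0_def by auto
  qed
  moreover have "int ` ?pos \<inter> (\<lambda>n. - int n) ` ?pos = {}" by auto
  ultimately show ?thesis using summable_on_Un_disjoint[OF pos neg] by simp
qed

lemma infsum_mult_le_sqrt: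
  fixes p q :: "'a \<Rightarrow> real"
  assumes nonneg: "\<And>x. x \<in> T \<Longrightarrow> p x \<ge> 0" "\<And>x. x \<in> T \<Longrightarrow> q x \<ge> 0"
    and sp: "(\<lambda>x. (p x)^2) summable_on T" and sq: "(\<lambda>x. (q x)^2) summable_on T"
  shows "(\<lambda>x. p x * q x) summable_on T"
    and "(\<Sum>\<^sub>\<infinity>x\<in>T. p x * q x) \<le> sqrt (\<Sum>\<^sub>\<infinity>x\<in>T. (p x)^2) * sqrt (\<Sum>\<^sub>\<infinity>x\<in>T. (q x)^2)"
proof -
  let ?bound = "sqrt (\<Sum>\<^sub>\<infinity>x\<in>T. (p x)^2) * sqrt (\<Sum>\<^sub>\<infinity>x\<in>T. (q x)^2)"
  have finite_bound: "(\<Sum>x\<in>F. p x * q x) \<le> ?bound" if "finite F" "F \<subseteq> T" for F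
  proof -
    have "(\<Sum>x\<in>F. p x * q x) \<le> sqrt ((\<Sum>x\<in>F. p x * q x)^2)"
      by (simp add: real_sqrt_ge_abs1)
    also have "\<dots> \<le> sqrt ((\<Sum>x\<in>F. (p x)^2) * (\<Sum>x\<in>F. (q x)^2))"
      by (rule real_sqrt_le_mono[OF Cauchy_Schwarz_ineq_sum])
    also have "\<dots> \<le> ?bound"
      unfolding real_sqrt_mult
      by (intro mult_mono real_sqrt_le_mono finite_sum_le_infsum sp sq that) (auto intro: sum_nonneg infsum_nonneg)
    finally show ?thesis .
  qed
  show summable: "(\<lambda>x. p x * q x) summable_on T"
    by (rule nonneg_bdd_above_summable_on)
      (use nonneg finite_bound in \<open>auto intro!: bdd_aboveI[of _ ?bound]\<close>)
  show "(\<Sum>\<^sub>\<infinity>x\<in>T. p x * q x) \<le> ?bound"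
    by (rule infsum_le_finite_sums[OF summable finite_bound])
qed

lemma abs_powr_minus_two_mult_square:
  "k \<noteq> 0 \<Longrightarrow> \<bar>real_of_int k\<bar> powr (2 * -1) * x^2 = (x / \<bar>real_of_int k\<bar>)^2"
  by (simp add: powr_minus power_divide divide_inverse power_mult_distrib power_inverse
      powr_realpow[symmetric] del: powr_realpow)

lemma in_Hdot_minus_one_iff:
  "in_Hdot (-1) u \<longleftrightarrow> (\<lambda>k. (norm (u k) / \<bar>real_of_int k\<bar>)^2) summable_on Z0"
  unfolding in_Hdot_def
  by (rule summable_on_cong) (simp add: Z0_def abs_powr_minus_two_mult_square[simplified])

lemma Hdot_norm_minus_one:
  "Hdot_norm (-1) u = sqrt (\<Sum>\<^sub>\<infinity>k\<in>Z0. (norm (u k) / \<bar>real_of_int k\<bar>)^2)"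
  unfolding Hdot_norm_def
  by (rule arg_cong[where f = sqrt], rule infsum_cong)
    (simp add: Z0_def abs_powr_minus_two_mult_square[simplified])

lemma convolution_le_sqrt_infsum:
  fixes a b :: "int \<Rightarrow> real" and k :: int
  defines "T \<equiv> {j. j \<noteq> 0 \<and> k - j \<noteq> 0}"
  assumes "\<And>j. a j \<ge> 0" "\<And>j. b j \<ge> 0"
    and sa: "(\<lambda>j. (a j)^2) summable_on Z0" and sb: "(\<lambda>j. (b j)^2) summable_on Z0"
  shows "(\<lambda>j. a j * b (k - j)) summable_on T"
    and "(\<Sum>\<^sub>\<infinity>j\<in>T. a j * b (k - j))
           \<le> sqrt (\<Sum>\<^sub>\<infinity>j\<in>Z0. (a j)^2) * sqrt (\<Sum>\<^sub>\<infinity>j\<in>Z0. (b j)^2)"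
proof -
  have T_sub: "T \<subseteq> Z0" "(\<lambda>j. k - j) ` T \<subseteq> Z0" and inj: "inj_on (\<lambda>j. k - j) T"
    unfolding T_def Z0_def inj_on_def by auto
  have sa_T: "(\<lambda>j. (a j)^2) summable_on T" by (rule summable_on_subset[OF sa T_sub(1)])
  have sb_T': "(\<lambda>j. (b j)^2) summable_on (\<lambda>j. k - j) ` T"
    by (rule summable_on_subset[OF sb T_sub(2)])
  then have sb_T: "(\<lambda>j. (b (k - j))^2) summable_on T"
    by (simp add: summable_on_reindex[OF inj] o_def)
  note cs = infsum_mult_le_sqrt[OF _ _ sa_T sb_T]
  show "(\<lambda>j. a j * b (k - j)) summable_on T" using cs(1) assms(2,3) by simp
  have "(\<Sum>\<^sub>\<infinity>j\<in>T. (b (k - j))^2) = (\<Sum>\<^sub>\<infinity>j\<in>(\<lambda>j. k - j) ` T. (b j)^2)"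
    by (simp add: infsum_reindex[OF inj] o_def)
  also have "\<dots> \<le> (\<Sum>\<^sub>\<infinity>j\<in>Z0. (b j)^2)" by (rule infsum_mono2[OF sb_T' sb T_sub(2)]) auto
  finally have "sqrt (\<Sum>\<^sub>\<infinity>j\<in>T. (b (k - j))^2) \<le> sqrt (\<Sum>\<^sub>\<infinity>j\<in>Z0. (b j)^2)"
    by (rule real_sqrt_le_mono)
  moreover have "sqrt (\<Sum>\<^sub>\<infinity>j\<in>T. (a j)^2) \<le> sqrt (\<Sum>\<^sub>\<infinity>j\<in>Z0. (a j)^2)"
    by (intro real_sqrt_le_mono infsum_mono2[OF sa_T sa T_sub(1)]) auto
  ultimately have "sqrt (\<Sum>\<^sub>\<infinity>j\<in>T. (a j)^2) * sqrt (\<Sum>\<^sub>\<infinity>j\<in>T. (b (k - j))^2)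
      \<le> sqrt (\<Sum>\<^sub>\<infinity>j\<in>Z0. (a j)^2) * sqrt (\<Sum>\<^sub>\<infinity>j\<in>Z0. (b j)^2)"
    by (intro mult_mono) (auto intro: infsum_nonneg)
  then show "(\<Sum>\<^sub>\<infinity>j\<in>T. a j * b (k - j))
      \<le> sqrt (\<Sum>\<^sub>\<infinity>j\<in>Z0. (a j)^2) * sqrt (\<Sum>\<^sub>\<infinity>j\<in>Z0. (b j)^2)"
    using cs(2) assms(2,3) by simp
qed

lemma norm_B2_le:
  assumes "in_Hdot (-1) u" and "in_Hdot (-1) v"
  shows "norm (B2 t u v k) \<le> Hdot_norm (-1) u * Hdot_norm (-1) v"
proof -
  define a where "a j = norm (u j) / \<bar>real_of_int j\<bar>" for j
  define b where "b j = norm (v j) / \<bar>real_of_int j\<bar>" for j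
  define f where "f j = exp (\<i> * of_real (3 * real_of_int k * real_of_int j * real_of_int (k - j) * t))
      * u j * v (k - j) / (of_int j * of_int (k - j))" for j
  let ?T = "{j. j \<noteq> 0 \<and> k - j \<noteq> 0}"
  have norm_f: "norm (f j) = a j * b (k - j)" for j
    unfolding f_def a_def b_def norm_mult norm_divide norm_of_int norm_exp_i_times by simp
  note conv = convolution_le_sqrt_infsum[of a b k]
  note conv = conv[OF _ _ assms[unfolded in_Hdot_minus_one_iff, folded a_def b_def]]
  have "f summable_on ?T"
    by (rule abs_summable_summable) (use conv(1) in \<open>simp add: a_def b_def norm_f\<close>)
  then have "norm (B2 t u v k) \<le> (\<Sum>\<^sub>\<infinity>j\<in>?T. a j * b (k - j))"
    unfolding B2_def f_def[symmetric]
    by (rule norm_infsum_le[OF has_sum_infsum has_sum_infsum])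
      (use conv(1) norm_f in \<open>auto simp: a_def b_def\<close>)
  also have "\<dots> \<le> Hdot_norm (-1) u * Hdot_norm (-1) v"
    using conv(2) unfolding Hdot_norm_minus_one a_def b_def by simp
  finally show ?thesis .
qed

lemma Hdot_norm_le_of_bounded:
  assumes "S > 1/2" and bounded: "\<And>k. k \<in> Z0 \<Longrightarrow> norm (w k) \<le> M"
  shows "in_Hdot (-S) w" and "Hdot_norm (-S) w \<le> cS S * M"
proof -
  let ?c = "\<lambda>k::int. \<bar>real_of_int k\<bar> powr (-2 * S)"
  have "M \<ge> 0" using order_trans[OF norm_ge_zero bounded[of 1]] by (simp add: Z0_def)
  have sc: "?c summable_on Z0" using summable_on_Z0_abs_powr[of "2 * S"] assms(1) by simp
  then have sc_M: "(\<lambda>k. ?c k * M^2) summable_on Z0" by (rule summable_on_cmult_left)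
  have le: "\<bar>real_of_int k\<bar> powr (2 * -S) * (norm (w k))^2 \<le> ?c k * M^2" if "k \<in> Z0" for k
    using power_mono[OF bounded[OF that] norm_ge_zero] by (simp add: mult_left_mono)
  have sw: "(\<lambda>k. \<bar>real_of_int k\<bar> powr (2 * -S) * (norm (w k))^2) summable_on Z0"
    by (rule summable_on_comparison_test[OF sc_M le]) auto
  then show "in_Hdot (-S) w" unfolding in_Hdot_def .
  have "(\<Sum>\<^sub>\<infinity>k\<in>Z0. \<bar>real_of_int k\<bar> powr (2 * -S) * (norm (w k))^2) \<le> (\<Sum>\<^sub>\<infinity>k\<in>Z0. ?c k) * M^2"
    using infsum_mono[OF sw sc_M le] infsum_cmult_left[of "M^2" ?c Z0] sc by simp
  then have "Hdot_norm (-S) w \<le> sqrt ((\<Sum>\<^sub>\<infinity>k\<in>Z0. ?c k) * M^2)"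
    unfolding Hdot_norm_def by (rule real_sqrt_le_mono)
  also have "\<dots> = cS S * M" using \<open>M \<ge> 0\<close> by (simp add: cS_def real_sqrt_mult)
  finally show "Hdot_norm (-S) w \<le> cS S * M" .
qed

theorem lemma7p5:
  fixes u v :: "int \<Rightarrow> complex" and S t :: real
  assumes "in_Hdot (-1) u" and "in_Hdot (-1) v" and "S > 1/2"
  shows "in_Hdot (-S) (B2 t u v) \<and>
         Hdot_norm (-S) (B2 t u v) \<le> cS S * Hdot_norm (-1) u * Hdot_norm (-1) v"
  using Hdot_norm_le_of_bounded[OF assms(3) norm_B2_le[OF assms(1,2)]]
  by (simp add: mult.assoc)

end
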